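(* Let $\varepsilon\in[0,1)$ and let $T:\Delta\to\Sigma_1$ be a test that $\Delta$-controls for type I error with probability $1-\varepsilon$, i.e. $P(T(P))\le\varepsilon$ for every $P\in\Delta$. Then for every $\delta\in(0,1-\varepsilon]$ the test $T$ can be manipulated with probability $1-\varepsilon-\delta$: there is a strategy $\zeta$ (a finitely supported probability on $\Delta$) such that for every $\omega\in\Omega$, $\zeta(\{P\in\Delta:\omega\notin T(P)\})\ge 1-\varepsilon-\delta$.
   Context: Let $\Omega=\{0,1\}^{\mathbb N}$ (paths) with the product topology; for $\omega\in\Omega$, $t\ge0$, $\omega^t$ is the cylinder of paths agreeing with $\omega$ in the first $t$ coordinates. $\Sigma$ is a fixed $\sigma$-algebra on $\Omega$ containing all cylinders; $\Sigma_1$ is the family of open subsets of $\Omega$ (equivalently, countable unions of cylinders). $\mathbb P$ is the set of finitely additive probabilities on $(\Omega,\Sigma)$. $P\in\mathbb P$ is strongly nonatomic (an "opinion") if for every $E\in\Sigma$ and $\alpha\in[0,1]$ there is $F\in\Sigma$ with $F\subseteq E$ and $P(F)=\alpha P(E)$; $\Delta$ denotes the set of opinions. A test is a function $T:\Delta\to\Sigma_1$. A strategy is a probability measure on $\Delta$ with finite support. *)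

theory Defs
  imports "HOL-Analysis.Analysis"
begin

type_synonym path = "nat \<Rightarrow> bool"
type_synonym fprob = "path set \<Rightarrow> real"

definition cyl :: "path \<Rightarrow> nat \<Rightarrow> path set" where
  "cyl \<omega> t = {\<omega>'. \<forall>i<t. \<omega>' i = \<omega> i}"

text \<open>Sigma_1: open sets of the product topology on {0,1}^N.\<close>
definition open_paths :: "path set \<Rightarrow> bool" where
  "open_paths U \<longleftrightarrow> (\<forall>\<omega>\<in>U. \<exists>t. cyl \<omega> t \<subseteq> U)"

definition fa_prob :: "path set set \<Rightarrow> fprob \<Rightarrow> bool" where
  "fa_prob Sig P \<longleftrightarrow>
     (\<forall>E\<in>Sig. 0 \<le> P E) \<and> P UNIV = 1 \<and>
     (\<forall>E\<in>Sig. \<forall>F\<in>Sig. E \<inter> F = {} \<longrightarrow> P (E \<union> F) = P E + P F)"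

text \<open>Opinions: strongly nonatomic finitely additive probabilities.\<close>
definition opinions :: "path set set \<Rightarrow> fprob set" where
  "opinions Sig = {P. fa_prob Sig P \<and>
     (\<forall>E\<in>Sig. \<forall>\<alpha>::real. 0 \<le> \<alpha> \<and> \<alpha> \<le> 1 \<longrightarrow>
        (\<exists>F\<in>Sig. F \<subseteq> E \<and> P F = \<alpha> * P E))}"

text \<open>A strategy: finitely supported probability on Delta, given by support S and weights w.\<close>
definition strategy :: "fprob set \<Rightarrow> fprob set \<Rightarrow> (fprob \<Rightarrow> real) \<Rightarrow> bool" where
  "strategy \<Delta> S w \<longleftrightarrow> finite S \<and> S \<subseteq> \<Delta> \<and> (\<forall>P\<in>S. 0 \<le> w P) \<and> sum w S = 1"

end

theory Submission
  imports Defs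
begin

text \<open>
  If no finitely supported strategy escapes rejection with
  probability \<open>1 - \<epsilon> - \<delta>\<close>, then every weighting of a finite set \<open>S\<close> of opinions is answered
  by a path rejecting most of its weight.  Multiplicative weights turns these answers
  into a finite list of paths at which every \<open>P \<in> S\<close> is rejected with frequency at least
  \<open>\<epsilon> + \<delta>/2\<close>.  Averaging "point opinions" along the list gives a functional assigning each
  rejection region \<open>T P\<close>, \<open>P \<in> S\<close>, probability at least \<open>\<epsilon> + \<delta>/2\<close>.  A point opinion at \<open>y\<close> is
  a strongly nonatomic finitely additive probability that gives mass one to every open set
  around \<open>y\<close>; it is a cluster point of uniform distributions on finite blocks of
  paths converging to \<open>y\<close>.  Finally a cluster point along the finite sets of opinions
  yields an opinion \<open>P\<close> with \<open>P (T P) > \<epsilon>\<close>.  Limits are cluster points in the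
  compact product space of \<open>[0,1]\<close>-valued functionals; the exact conditions that
  survive these limits are collected in the notion of a regular functional.
\<close>

section \<open>Cluster points of nets of bounded functionals\<close>

text \<open>Tychonoff: functionals with values in the unit interval form a compact subset of the
  product space.  This is the only source of limits in the whole argument.\<close>

lemma compact_unit_cube: "compact {f :: 'a \<Rightarrow> real. \<forall>x. f x \<in> {0..1}}"
proof -
  have "compactin (product_topology (\<lambda>_. euclidean) UNIV) (PiE UNIV (\<lambda>_::'a. {0..1::real}))"
    by (simp add: compactin_PiE)
  moreover have "PiE UNIV (\<lambda>_::'a. {0..1::real}) = {f. \<forall>x. f x \<in> {0..1}}"
    by (auto simp: PiE_def Pi_def)
  ultimately show ?thesis
    by (simp add: euclidean_product_topology)
qed

definition cluster_point :: "'b::topological_space \<Rightarrow> ('a \<Rightarrow> 'b) \<Rightarrow> 'a filter \<Rightarrow> bool" where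
  "cluster_point L g F \<longleftrightarrow> inf (nhds L) (filtermap g F) \<noteq> bot"

lemma ex_cluster_point:
  assumes "F \<noteq> bot" and "compact K" and "eventually (\<lambda>i. g i \<in> K) F"
  shows "\<exists>L. cluster_point L g F"
  using assms compact_filter[THEN iffD1, rule_format, of K "filtermap g F"]
  by (auto simp: cluster_point_def filtermap_bot_iff eventually_filtermap)

lemma cluster_point_closed:
  assumes L: "cluster_point L g F" and C: "closed C" and ev: "eventually (\<lambda>i. g i \<in> C) F"
  shows "L \<in> C"
proof (rule ccontr)
  assume "L \<notin> C"
  then have "eventually (\<lambda>x. x \<notin> C) (nhds L)"
    using C unfolding eventually_nhds by (intro exI[of _ "- C"]) (auto simp: open_Compl)
  moreover have "eventually (\<lambda>x. x \<in> C) (filtermap g F)"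
    using ev by (simp add: eventually_filtermap)
  ultimately have "eventually (\<lambda>_. False) (inf (nhds L) (filtermap g F))"
    unfolding eventually_inf by blast
  then show False
    using L by (simp add: cluster_point_def trivial_limit_def)
qed

lemma cluster_point_le:
  fixes \<phi> \<psi> :: "'b::topological_space \<Rightarrow> real"
  assumes L: "cluster_point L g F" and "continuous_on UNIV \<phi>" and "continuous_on UNIV \<psi>"
    and ev: "eventually (\<lambda>i. P (g i)) F" and le: "\<And>Q. P Q \<Longrightarrow> \<phi> Q \<le> \<psi> Q"
  shows "\<phi> L \<le> \<psi> L"
proof -
  have "eventually (\<lambda>i. g i \<in> {Q. \<phi> Q \<le> \<psi> Q}) F"
    using ev by (rule eventually_mono) (simp add: le)
  then show ?thesis
    using cluster_point_closed[OF L closed_Collect_le[OF assms(2,3)]] by simp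
qed

lemma cluster_point_eq:
  fixes \<phi> \<psi> :: "'b::topological_space \<Rightarrow> real"
  assumes L: "cluster_point L g F" and "continuous_on UNIV \<phi>" and "continuous_on UNIV \<psi>"
    and ev: "eventually (\<lambda>i. P (g i)) F" and eq: "\<And>Q. P Q \<Longrightarrow> \<phi> Q = \<psi> Q"
  shows "\<phi> L = \<psi> L"
  using cluster_point_le[OF L assms(2,3) ev] cluster_point_le[OF L assms(3,2) ev] eq
  by (simp add: order_antisym)

section \<open>Coding words as paths, blocks, and the shrinking operator\<close>

definition code :: "bool list \<Rightarrow> path" where
  "code u i \<longleftrightarrow> (if i < length u then u ! i else i = length u)"

lemma code_inj: "inj code"
proof (rule injI)
  fix u v assume eq: "code u = code v"
  have last_true: "\<And>w. code w (length w)" and zero_above: "\<And>w i. length w < i \<Longrightarrow> \<not> code w i"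
    by (simp_all add: code_def)
  have "length u = length v"
    using eq last_true zero_above by (metis linorder_neqE_nat)
  moreover have "u ! i = v ! i" if "i < length u" for i
    using fun_cong[OF eq, of i] that \<open>length u = length v\<close> by (simp add: code_def)
  ultimately show "u = v" by (simp add: nth_equalityI)
qed

text \<open>Blocks of distinct words are disjoint, which lets a
  single set be chosen blockwise (see \<open>shrink\<close>).\<close>

definition block :: "bool list \<Rightarrow> path set" where
  "block p = (\<lambda>s. code (p @ s)) ` {s. length s = length p}"

definition prefix :: "path \<Rightarrow> nat \<Rightarrow> bool list" where
  "prefix x n = map x [0..<n]"

lemma length_prefix [simp]: "length (prefix x n) = n"
  by (simp add: prefix_def)

lemma block_disjoint:
  assumes "p \<noteq> q" shows "block p \<inter> block q = {}"
proof -
  have "p @ s \<noteq> q @ s'" if "length s = length p" "length s' = length q" for s s'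
  proof
    assume eq: "p @ s = q @ s'"
    then have "length (p @ s) = length (q @ s')" by simp
    then have "length p = length q"
      using that by simp
    then show False
      using eq assms by simp
  qed
  then show ?thesis
    by (auto simp: block_def dest!: injD[OF code_inj])
qed

lemma finite_block: "finite (block p)"
  unfolding block_def using finite_lists_length_eq[of "UNIV :: bool set"] by simp

lemma card_block: "card (block p) = 2 ^ length p"
proof -
  have "inj_on (\<lambda>s. code (p @ s)) {s. length s = length p}"
    by (auto intro!: inj_onI dest!: injD[OF code_inj])
  then show ?thesis
    using card_lists_length_eq[of "UNIV :: bool set" "length p"] by (simp add: block_def card_image)
qed

lemma block_prefix_subset_cyl: "t \<le> n \<Longrightarrow> block (prefix x n) \<subseteq> cyl x t"
  by (auto simp: block_def cyl_def code_def prefix_def nth_append)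

definition ratio :: "path \<Rightarrow> nat \<Rightarrow> path set \<Rightarrow> real" where
  "ratio x n E = real (card (E \<inter> block (prefix x n))) / 2 ^ n"

lemma ratio_bounds: "0 \<le> ratio x n E \<and> ratio x n E \<le> 1"
proof -
  have "card (E \<inter> block (prefix x n)) \<le> card (block (prefix x n))"
    by (intro card_mono finite_block) auto
  then have "real (card (E \<inter> block (prefix x n))) \<le> 2 ^ n"
    by (simp add: card_block flip: of_nat_le_iff)
  then show ?thesis by (simp add: ratio_def)
qed

lemma ratio_additive: "E \<inter> F = {} \<Longrightarrow> ratio x n (E \<union> F) = ratio x n E + ratio x n F"
  by (simp add: ratio_def Int_Un_distrib2 card_Un_disjoint finite_block add_divide_distrib
      disjoint_iff)

lemma ratio_covering: "block (prefix x n) \<subseteq> V \<Longrightarrow> ratio x n V = 1"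
  by (simp add: ratio_def card_block Int_absorb1)

text \<open>It is a countable subset of \<open>E\<close> whose proportion is \<open>a\<close> times that of \<open>E\<close> up to one point per
  block; it is the witness for strong nonatomicity.\<close>

definition shrink_part :: "path set \<Rightarrow> real \<Rightarrow> bool list \<Rightarrow> path set" where
  "shrink_part E a p =
     (SOME B. B \<subseteq> E \<inter> block p \<and> card B = nat \<lfloor>a * real (card (E \<inter> block p))\<rfloor>)"

definition shrink :: "path set \<Rightarrow> real \<Rightarrow> path set" where
  "shrink E a = (\<Union>p. shrink_part E a p)"

lemma shrink_part_spec:
  assumes "0 \<le> a" "a \<le> 1"
  shows "shrink_part E a p \<subseteq> E \<inter> block p"
    and "card (shrink_part E a p) = nat \<lfloor>a * real (card (E \<inter> block p))\<rfloor>"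
proof -
  have "a * real (card (E \<inter> block p)) \<le> real (card (E \<inter> block p))"
    using assms by (simp add: mult_left_le_one_le)
  then have "nat \<lfloor>a * real (card (E \<inter> block p))\<rfloor> \<le> card (E \<inter> block p)"
    by linarith
  then obtain B where "B \<subseteq> E \<inter> block p" "card B = nat \<lfloor>a * real (card (E \<inter> block p))\<rfloor>"
    by (rule obtain_subset_with_card_n)
  then show "shrink_part E a p \<subseteq> E \<inter> block p"
    and "card (shrink_part E a p) = nat \<lfloor>a * real (card (E \<inter> block p))\<rfloor>"
    unfolding shrink_part_def by (metis (mono_tags, lifting) someI)+
qed

lemma shrink_subset:
  assumes "0 \<le> a" "a \<le> 1"
  shows "shrink E a \<subseteq> E"
  using shrink_part_spec(1)[OF assms] by (auto simp: shrink_def)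

lemma shrink_Int_block:
  assumes "0 \<le> a" "a \<le> 1"
  shows "shrink E a \<inter> block p = shrink_part E a p"
proof
  show "shrink E a \<inter> block p \<subseteq> shrink_part E a p"
  proof
    fix y assume "y \<in> shrink E a \<inter> block p"
    then obtain q where y: "y \<in> shrink_part E a q" "y \<in> block p"
      by (auto simp: shrink_def)
    then have "y \<in> block q"
      using shrink_part_spec(1)[OF assms] by blast
    then have "q = p"
      using y(2) block_disjoint by blast
    then show "y \<in> shrink_part E a p"
      using y(1) by simp
  qed
  show "shrink_part E a p \<subseteq> shrink E a \<inter> block p"
    using shrink_part_spec(1)[OF assms] by (auto simp: shrink_def)
qed

lemma countable_shrink:
  assumes "0 \<le> a" "a \<le> 1"
  shows "countable (shrink E a)"
proof -
  have "finite (shrink_part E a p)" for p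
    using shrink_part_spec(1)[OF assms] finite_block by (meson finite_Int finite_subset)
  then show ?thesis
    unfolding shrink_def by (intro countable_UN[OF countableI_type] countable_finite)
qed

text \<open>Rounding costs at most one point out of \<open>2 ^ n\<close>.\<close>

lemma ratio_shrink:
  assumes "0 \<le> a" "a \<le> 1"
  shows "\<bar>ratio x n (shrink E a) - a * ratio x n E\<bar> \<le> (1/2) ^ n"
proof -
  define k where "k = real (card (E \<inter> block (prefix x n)))"
  have "ratio x n (shrink E a) = real_of_int \<lfloor>a * k\<rfloor> / 2 ^ n"
    using assms by (simp add: ratio_def shrink_Int_block shrink_part_spec(2) k_def)
  moreover have "a * ratio x n E = a * k / 2 ^ n"
    by (simp add: ratio_def k_def)
  moreover have "\<bar>real_of_int \<lfloor>a * k\<rfloor> - a * k\<bar> \<le> 1"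
    by linarith
  ultimately show ?thesis
    by (simp add: diff_divide_distrib[symmetric] abs_divide divide_right_mono power_one_over)
qed

section \<open>Regular functionals are opinions\<close>

text \<open>Regular functionals: finitely additive probabilities on all sets of paths that scale
  exactly under \<open>shrink\<close>.  All of these conditions are closed in the product topology.\<close>

definition regular_prob :: "fprob \<Rightarrow> bool" where
  "regular_prob Q \<longleftrightarrow> (\<forall>E. 0 \<le> Q E \<and> Q E \<le> 1) \<and> Q UNIV = 1 \<and>
     (\<forall>E F. E \<inter> F = {} \<longrightarrow> Q (E \<union> F) = Q E + Q F) \<and>
     (\<forall>E a. 0 \<le> a \<longrightarrow> a \<le> 1 \<longrightarrow> Q (shrink E a) = a * Q E)"

lemma regular_prob_cluster_point:
  assumes L: "cluster_point L g F" and ev: "eventually (\<lambda>i. regular_prob (g i)) F"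
  shows "regular_prob L"
proof -
  note le = cluster_point_le[OF L, where P = regular_prob]
    and eq = cluster_point_eq[OF L, where P = regular_prob]
  have "0 \<le> L E" for E
    by (rule le[where \<phi> = "\<lambda>_. 0" and \<psi> = "\<lambda>Q. Q E"])
      (use ev in \<open>simp_all add: regular_prob_def\<close>)
  moreover have "L E \<le> 1" for E
    by (rule le[where \<phi> = "\<lambda>Q. Q E" and \<psi> = "\<lambda>_. 1"])
      (use ev in \<open>simp_all add: regular_prob_def\<close>)
  moreover have "L UNIV = 1"
    by (rule eq[where \<phi> = "\<lambda>Q. Q UNIV" and \<psi> = "\<lambda>_. 1"])
      (use ev in \<open>simp_all add: regular_prob_def\<close>)
  moreover have "L (E \<union> E') = L E + L E'" if "E \<inter> E' = {}" for E E'
    by (rule eq[where \<phi> = "\<lambda>Q. Q (E \<union> E')" and \<psi> = "\<lambda>Q. Q E + Q E'"])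
      (use ev that in \<open>simp_all add: regular_prob_def continuous_on_add\<close>)
  moreover have "L (shrink E a) = a * L E" if "0 \<le> a" "a \<le> 1" for E a
    by (rule eq[where \<phi> = "\<lambda>Q. Q (shrink E a)" and \<psi> = "\<lambda>Q. a * Q E"])
      (use ev that in \<open>simp_all add: regular_prob_def continuous_on_mult_left\<close>)
  ultimately show ?thesis
    unfolding regular_prob_def by blast
qed

text \<open>Singletons are countable intersections of cylinders, so \<open>\<Sigma>\<close> contains all countable sets,
  in particular all sets \<open>shrink E a\<close>.\<close>

lemma singleton_in_sets:
  assumes Sig: "sigma_algebra UNIV Sig" and cyl: "\<forall>\<omega> t. cyl \<omega> t \<in> Sig"
  shows "{y} \<in> Sig"
proof -
  have "{y} = (\<Inter>t. cyl y t)"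
    by (auto simp: cyl_def fun_eq_iff)
  then show ?thesis
    using cyl sigma_algebra.countable_INT[OF Sig, of "cyl y" UNIV] by auto
qed

lemma regular_prob_opinion:
  assumes Sig: "sigma_algebra UNIV Sig" and cyl: "\<forall>\<omega> t. cyl \<omega> t \<in> Sig"
    and Q: "regular_prob Q"
  shows "Q \<in> opinions Sig"
  unfolding opinions_def fa_prob_def
proof (intro CollectI conjI ballI allI impI)
  fix E and \<alpha> :: real assume "0 \<le> \<alpha> \<and> \<alpha> \<le> 1"
  then have "shrink E \<alpha> \<in> Sig" "shrink E \<alpha> \<subseteq> E" "Q (shrink E \<alpha>) = \<alpha> * Q E"
    using sigma_algebra.countable[OF Sig] singleton_in_sets[OF Sig cyl] countable_shrink
      shrink_subset Q by (auto simp: regular_prob_def)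
  then show "\<exists>F\<in>Sig. F \<subseteq> E \<and> Q F = \<alpha> * Q E"
    by blast
qed (use Q in \<open>simp_all add: regular_prob_def\<close>)

section \<open>Point opinions and their mixtures\<close>

definition point_opinion :: "path \<Rightarrow> fprob" where
  "point_opinion y = (SOME L. cluster_point L (\<lambda>n. ratio y n) sequentially)"

lemma point_opinion_cluster_point: "cluster_point (point_opinion y) (\<lambda>n. ratio y n) sequentially"
proof -
  have "\<exists>L. cluster_point L (\<lambda>n. ratio y n) sequentially"
    using ratio_bounds by (intro ex_cluster_point[OF _ compact_unit_cube]) auto
  then show ?thesis
    unfolding point_opinion_def by (rule someI_ex)
qed

text \<open>Each proportion functional is a finitely additive probability and scales under \<open>shrink\<close>
  up to an error \<open>(1/2) ^ n\<close> that vanishes along the sequence; hence point opinions are regular.\<close>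

lemma regular_point_opinion: "regular_prob (point_opinion y)"
proof -
  note L = point_opinion_cluster_point[of y]
  let ?R = "\<lambda>Q. \<exists>n. Q = ratio y n"
  have ev: "eventually (\<lambda>n. ?R (ratio y n)) sequentially"
    by (rule always_eventually) blast
  have "0 \<le> point_opinion y E" for E
    by (rule cluster_point_le[OF L, where P = ?R and \<phi> = "\<lambda>_. 0" and \<psi> = "\<lambda>Q. Q E"])
      (use ev ratio_bounds in auto)
  moreover have "point_opinion y E \<le> 1" for E
    by (rule cluster_point_le[OF L, where P = ?R and \<phi> = "\<lambda>Q. Q E" and \<psi> = "\<lambda>_. 1"])
      (use ev ratio_bounds in auto)
  moreover have "point_opinion y UNIV = 1"
    by (rule cluster_point_eq[OF L, where P = ?R and \<phi> = "\<lambda>Q. Q UNIV" and \<psi> = "\<lambda>_. 1"])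
      (use ev ratio_covering in auto)
  moreover have "point_opinion y (E \<union> E') = point_opinion y E + point_opinion y E'"
    if "E \<inter> E' = {}" for E E'
    by (rule cluster_point_eq[OF L, where P = ?R and \<phi> = "\<lambda>Q. Q (E \<union> E')" and \<psi> = "\<lambda>Q. Q E + Q E'"])
      (use ev that ratio_additive in \<open>auto simp: continuous_on_add\<close>)
  moreover have "point_opinion y (shrink E a) = a * point_opinion y E"
    if a: "0 \<le> a" "a \<le> 1" for E a
  proof -
    have close: "\<bar>point_opinion y (shrink E a) - a * point_opinion y E\<bar> \<le> \<eta>" if "0 < \<eta>" for \<eta>
    proof (rule cluster_point_le[OF L, where P = "\<lambda>Q. \<bar>Q (shrink E a) - a * Q E\<bar> \<le> \<eta>"])
      have "eventually (\<lambda>n. (1/2::real) ^ n < \<eta>) sequentially"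
        using that by (intro order_tendstoD(2)[OF LIMSEQ_realpow_zero]) auto
      then show "eventually (\<lambda>n. \<bar>ratio y n (shrink E a) - a * ratio y n E\<bar> \<le> \<eta>) sequentially"
        by (rule eventually_mono) (meson ratio_shrink[OF a] less_imp_le order_trans)
    qed (auto intro!: continuous_intros)
    have "\<bar>point_opinion y (shrink E a) - a * point_opinion y E\<bar> \<le> 0"
      by (rule field_le_epsilon) (simp add: close)
    then show ?thesis
      by simp
  qed
  ultimately show ?thesis
    unfolding regular_prob_def by blast
qed

text \<open>An open set containing \<open>y\<close> contains a cylinder around \<open>y\<close> and hence all late blocks.\<close>

lemma point_opinion_open:
  assumes V: "open_paths V" and y: "y \<in> V"
  shows "point_opinion y V = 1"
proof -
  obtain t where t: "cyl y t \<subseteq> V"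
    using V y unfolding open_paths_def by blast
  have ev: "eventually (\<lambda>n. ratio y n V = 1) sequentially"
    unfolding eventually_sequentially
    using t block_prefix_subset_cyl ratio_covering by (meson order_trans)
  show ?thesis
    by (rule cluster_point_eq[OF point_opinion_cluster_point,
          where P = "\<lambda>Q. Q V = 1" and \<phi> = "\<lambda>Q. Q V" and \<psi> = "\<lambda>_. 1"]) (use ev in auto)
qed

definition mixture :: "path list \<Rightarrow> fprob" where
  "mixture xs E = (\<Sum>y\<leftarrow>xs. point_opinion y E) / real (length xs)"

lemma regular_mixture:
  assumes "xs \<noteq> []"
  shows "regular_prob (mixture xs)"
proof -
  have pt: "regular_prob (point_opinion y)" for y
    by (rule regular_point_opinion)
  have "0 \<le> (\<Sum>y\<leftarrow>xs. point_opinion y E)" for E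
    using pt by (intro sum_list_nonneg) (auto simp: regular_prob_def)
  moreover have "(\<Sum>y\<leftarrow>xs. point_opinion y E) \<le> (\<Sum>y\<leftarrow>xs. 1)" for E
    using pt by (intro sum_list_mono) (auto simp: regular_prob_def)
  ultimately show ?thesis
    using pt assms
    by (auto simp: regular_prob_def mixture_def sum_list_triv sum_list_addf add_divide_distrib
        sum_list_const_mult)
qed

lemma mixture_lower_bound:
  assumes "open_paths V"
  shows "real (length (filter (\<lambda>y. y \<in> V) xs)) / real (length xs) \<le> mixture xs V"
proof -
  have "real (length (filter (\<lambda>y. y \<in> V) xs)) \<le> (\<Sum>y\<leftarrow>xs. point_opinion y V)"
  proof (induction xs)
    case (Cons y ys)
    have "0 \<le> point_opinion y V"
      using regular_point_opinion[of y] by (simp add: regular_prob_def)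
    with Cons.IH show ?case
      by (cases "y \<in> V") (simp_all add: point_opinion_open[OF assms] add_increasing)
  qed simp
  then show ?thesis
    unfolding mixture_def by (simp add: divide_right_mono)
qed

section \<open>Multiplicative weights\<close>

text \<open>The multiplicative-weights step size: for \<open>c < c'\<close> some base \<open>b > 1\<close> satisfies
  \<open>1 + (b - 1) c < b powr c'\<close>, since the derivative of \<open>z powr c' - (z - 1) c\<close> at 1 is \<open>c' - c\<close>.\<close>

lemma exists_growth_base:
  fixes c c' :: real
  assumes "c < c'"
  shows "\<exists>b>1. 1 + (b - 1) * c < b powr c'"
proof -
  let ?F = "\<lambda>z::real. z powr c' - (z - 1) * c"
  have "DERIV ?F 1 :> c' * 1 powr (c' - 1) - 1 * c"
    by (intro DERIV_diff has_real_derivative_powr) (auto intro!: derivative_eq_intros)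
  then have "DERIV ?F 1 :> c' - c"
    by simp
  from DERIV_pos_inc_right[OF this] assms
  obtain d where d: "d > 0" "\<forall>h>0. h < d \<longrightarrow> ?F 1 < ?F (1 + h)"
    by auto
  then have "?F 1 < ?F (1 + d / 2)"
    using d(2)[rule_format, of "d / 2"] by simp
  then show ?thesis
    using d(1) by (intro exI[of _ "1 + d / 2"]) simp
qed

text \<open>The learner weights \<open>P\<close>
  proportionally to \<open>b\<close> to the number of past rounds with \<open>g P \<omega>\<close>; the total of these
  powers, the potential, grows at most by the factor \<open>1 + (b - 1) c\<close> per round.\<close>

context
  fixes S :: "'a set" and g :: "'a \<Rightarrow> 'b \<Rightarrow> bool" and c b :: real
  assumes finite_S: "finite S" and nonempty_S: "S \<noteq> {}" and b_gt_1: "1 < b"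
    and adversary: "\<And>w. (\<forall>P\<in>S. 0 \<le> w P) \<Longrightarrow> sum w S = 1 \<Longrightarrow> \<exists>\<omega>. sum w {P\<in>S. g P \<omega>} < c"
begin

definition potential :: "'b list \<Rightarrow> real" where
  "potential xs = (\<Sum>P\<in>S. b ^ length (filter (g P) xs))"

definition weights :: "'b list \<Rightarrow> 'a \<Rightarrow> real" where
  "weights xs P = b ^ length (filter (g P) xs) / potential xs"

definition response :: "'b list \<Rightarrow> 'b" where
  "response xs = (SOME \<omega>. sum (weights xs) {P\<in>S. g P \<omega>} < c)"

definition play :: "nat \<Rightarrow> 'b list" where
  "play n = ((\<lambda>xs. xs @ [response xs]) ^^ n) []"

text \<open>The threshold is positive: test the adversary on a point mass.\<close>

lemma threshold_pos: "0 < c"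
proof -
  obtain P0 where "P0 \<in> S"
    using nonempty_S by blast
  define w where "w P = (if P = P0 then 1 else 0 :: real)" for P
  have "(\<forall>P\<in>S. 0 \<le> w P) \<and> sum w S = 1"
    using finite_S \<open>P0 \<in> S\<close> by (simp add: w_def)
  then obtain \<omega> where "sum w {P\<in>S. g P \<omega>} < c"
    using adversary by blast
  moreover have "0 \<le> sum w {P\<in>S. g P \<omega>}"
    by (intro sum_nonneg) (simp add: w_def)
  ultimately show ?thesis
    by simp
qed

lemma potential_pos: "0 < potential xs"
  unfolding potential_def using finite_S nonempty_S b_gt_1 by (intro sum_pos) auto

lemma count_le_potential: "P \<in> S \<Longrightarrow> b ^ length (filter (g P) xs) \<le> potential xs"
  unfolding potential_def using finite_S b_gt_1 by (intro member_le_sum) auto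

lemma weights_distribution: "(\<forall>P\<in>S. 0 \<le> weights xs P) \<and> sum (weights xs) S = 1"
  using potential_pos[of xs] b_gt_1
  by (auto simp: weights_def potential_def sum_divide_distrib[symmetric])

lemma response_good: "sum (weights xs) {P\<in>S. g P (response xs)} < c"
  unfolding response_def using adversary[OF weights_distribution[THEN conjunct1]
      weights_distribution[THEN conjunct2]] by (rule someI_ex)

lemma potential_snoc:
  "potential (xs @ [\<omega>]) = potential xs * (1 + (b - 1) * sum (weights xs) {P\<in>S. g P \<omega>})"
proof -
  let ?h = "\<lambda>P. b ^ length (filter (g P) xs)"
  have "potential (xs @ [\<omega>]) = potential xs + (\<Sum>P\<in>S. if g P \<omega> then (b - 1) * ?h P else 0)"
  proof -
    have "b ^ length (filter (g P) (xs @ [\<omega>])) = ?h P + (if g P \<omega> then (b - 1) * ?h P else 0)" for P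
      by (simp add: algebra_simps)
    then show ?thesis
      unfolding potential_def by (simp add: sum.distrib)
  qed
  also have "(\<Sum>P\<in>S. if g P \<omega> then (b - 1) * ?h P else 0) = (\<Sum>P\<in>{P\<in>S. g P \<omega>}. (b - 1) * ?h P)"
    using finite_S by (simp add: sum.inter_filter)
  also have "\<dots> = potential xs * ((b - 1) * sum (weights xs) {P\<in>S. g P \<omega>})"
    using potential_pos[of xs]
    by (simp add: weights_def sum_distrib_left[symmetric] sum_divide_distrib[symmetric])
  finally show ?thesis
    by (simp add: algebra_simps)
qed

lemma length_play: "length (play n) = n"
  by (induction n) (simp_all add: play_def)

lemma potential_play: "potential (play n) \<le> real (card S) * (1 + (b - 1) * c) ^ n"
proof (induction n)
  case 0
  then show ?case
    by (simp add: play_def potential_def)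
next
  case (Suc n)
  let ?xs = "play n"
  have "0 < (b - 1) * c"
    using threshold_pos b_gt_1 by simp
  then have growth: "0 \<le> 1 + (b - 1) * c"
    by linarith
  have "potential (play (Suc n))
      = potential ?xs * (1 + (b - 1) * sum (weights ?xs) {P\<in>S. g P (response ?xs)})"
    by (simp add: play_def potential_snoc)
  also have "\<dots> \<le> potential ?xs * (1 + (b - 1) * c)"
    using response_good[of ?xs] b_gt_1 potential_pos[of ?xs] by (intro mult_left_mono) auto
  also have "\<dots> \<le> real (card S) * (1 + (b - 1) * c) ^ n * (1 + (b - 1) * c)"
    using Suc.IH growth by (rule mult_right_mono)
  finally show ?case
    by (simp add: mult_ac)
qed

end

text \<open>Consequence: some finite sequence of answers makes every \<open>P \<in> S\<close> hit with frequency at most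
  \<open>c'\<close>, because \<open>b\<close> to the number of hits is bounded by a potential of growth rate below
  \<open>b powr c'\<close>.\<close>

lemma multiplicative_weights:
  fixes S :: "'a set" and g :: "'a \<Rightarrow> 'b \<Rightarrow> bool" and c c' :: real
  assumes fin: "finite S" and ne: "S \<noteq> {}" and cc: "c < c'"
    and adversary: "\<And>w. (\<forall>P\<in>S. 0 \<le> w P) \<Longrightarrow> sum w S = 1 \<Longrightarrow> \<exists>\<omega>. sum w {P\<in>S. g P \<omega>} < c"
  shows "\<exists>xs. xs \<noteq> [] \<and> (\<forall>P\<in>S. real (length (filter (g P) xs)) \<le> c' * real (length xs))"
proof -
  obtain b where b: "1 < b" "1 + (b - 1) * c < b powr c'"
    using exists_growth_base[OF cc] by blast
  note game = fin ne b(1) adversary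
  have "0 < (b - 1) * c"
    using threshold_pos[OF game] b(1) by simp
  then have q: "0 < 1 + (b - 1) * c"
    by linarith
  let ?r = "b powr c' / (1 + (b - 1) * c)"
  have "1 < ?r"
    using b q by simp
  then obtain N where N: "real (card S) < ?r ^ N"
    using real_arch_pow by blast
  let ?xs = "play S g c b N"
  have len: "length ?xs = N"
    by (rule length_play[OF game])
  have "N \<noteq> 0"
    using N fin ne by (auto simp: card_gt_0_iff Suc_le_eq)
  moreover have "real (length (filter (g P) ?xs)) \<le> c' * real N" if P: "P \<in> S" for P
  proof -
    have "b powr real (length (filter (g P) ?xs)) = b ^ length (filter (g P) ?xs)"
      using b(1) by (simp add: powr_realpow)
    also have "\<dots> \<le> potential S g b ?xs"
      by (rule count_le_potential[OF game P])
    also have "\<dots> \<le> real (card S) * (1 + (b - 1) * c) ^ N"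
      by (rule potential_play[OF game])
    also have "\<dots> < ?r ^ N * (1 + (b - 1) * c) ^ N"
      using N q by (intro mult_strict_right_mono) auto
    also have "\<dots> = b powr (c' * real N)"
      using q b(1) by (simp add: power_divide powr_realpow[symmetric] powr_powr)
    finally show ?thesis
      using b(1) by (simp add: powr_less_cancel_iff)
  qed
  ultimately show ?thesis
    using len by (intro exI[of _ ?xs]) auto
qed

section \<open>Manipulating a test\<close>

text \<open>If every weighting of the finite set \<open>S\<close> is answered by a path at which the tests accept
  less than weight \<open>c\<close>, then some regular functional gives every rejection region \<open>T P\<close>,
  \<open>P \<in> S\<close>, probability at least \<open>1 - c'\<close>: mix the point opinions along the answers chosen
  against multiplicative weights.\<close>

lemma calibrated_mixture:
  fixes S :: "'a set" and T :: "'a \<Rightarrow> path set" and c c' :: real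
  assumes fin: "finite S" and cc: "c < c'" and opn: "\<forall>P\<in>S. open_paths (T P)"
    and adversary: "\<And>w. (\<forall>P\<in>S. 0 \<le> w P) \<Longrightarrow> sum w S = 1 \<Longrightarrow> \<exists>\<omega>. sum w {P\<in>S. \<omega> \<notin> T P} < c"
  shows "\<exists>Q. regular_prob Q \<and> (\<forall>P\<in>S. 1 - c' \<le> Q (T P))"
proof (cases "S = {}")
  case True
  then show ?thesis
    using regular_point_opinion by blast
next
  case False
  obtain xs where xs: "xs \<noteq> []"
    "\<forall>P\<in>S. real (length (filter (\<lambda>\<omega>. \<omega> \<notin> T P) xs)) \<le> c' * real (length xs)"
    using multiplicative_weights[OF fin False cc, of "\<lambda>P \<omega>. \<omega> \<notin> T P"] adversary by blast
  have "1 - c' \<le> mixture xs (T P)" if P: "P \<in> S" for P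
  proof -
    have "real (length (filter (\<lambda>\<omega>. \<omega> \<in> T P) xs)) + real (length (filter (\<lambda>\<omega>. \<omega> \<notin> T P) xs))
        = real (length xs)"
      using sum_length_filter_compl[of "\<lambda>\<omega>. \<omega> \<in> T P" xs] by (simp flip: of_nat_add)
    moreover have "real (length (filter (\<lambda>\<omega>. \<omega> \<notin> T P) xs)) \<le> c' * real (length xs)"
      using xs(2) P by blast
    ultimately have "(1 - c') * real (length xs) \<le> real (length (filter (\<lambda>\<omega>. \<omega> \<in> T P) xs))"
      by (simp add: algebra_simps)
    then have "1 - c' \<le> real (length (filter (\<lambda>\<omega>. \<omega> \<in> T P) xs)) / real (length xs)"
      using xs(1) by (simp add: pos_le_divide_eq)
    also have "\<dots> \<le> mixture xs (T P)"
      using mixture_lower_bound opn P by blast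
    finally show ?thesis .
  qed
  then show ?thesis
    using regular_mixture[OF xs(1)] by blast
qed

text \<open>Take a cluster point of these functionals along the finite subsets of opinions.\<close>

lemma regular_fixed_point:
  fixes T :: "fprob \<Rightarrow> path set" and r :: real
  assumes Sig: "sigma_algebra UNIV Sig" and cyl: "\<forall>\<omega> t. cyl \<omega> t \<in> Sig"
    and calibrated: "\<And>S. finite S \<Longrightarrow> S \<subseteq> opinions Sig \<Longrightarrow>
      \<exists>Q. regular_prob Q \<and> (\<forall>P\<in>S. r \<le> Q (T P))"
  shows "\<exists>P\<in>opinions Sig. r \<le> P (T P)"
proof -
  define F where "F = finite_subsets_at_top (opinions Sig)"
  define Q where "Q S = (SOME Q. regular_prob Q \<and> (\<forall>P\<in>S. r \<le> Q (T P)))" for S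
  have ev_Q: "eventually (\<lambda>S. regular_prob (Q S) \<and> (\<forall>P\<in>S. r \<le> Q S (T P))) F"
    unfolding F_def
  proof (rule eventually_finite_subsets_at_top_weakI)
    fix S assume "finite S" "S \<subseteq> opinions Sig"
    then show "regular_prob (Q S) \<and> (\<forall>P\<in>S. r \<le> Q S (T P))"
      unfolding Q_def by (rule someI_ex[OF calibrated])
  qed
  have "eventually (\<lambda>S. Q S \<in> {f. \<forall>x. f x \<in> {0..1}}) F"
    using ev_Q by (rule eventually_mono) (simp add: regular_prob_def)
  then have "\<exists>L. cluster_point L Q F"
    by (intro ex_cluster_point[OF _ compact_unit_cube]) (simp_all add: F_def)
  then obtain L where L: "cluster_point L Q F" ..
  have "regular_prob L"
    using regular_prob_cluster_point[OF L] ev_Q by (simp add: eventually_conj_iff)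
  then have L_opinion: "L \<in> opinions Sig"
    by (rule regular_prob_opinion[OF Sig cyl])
  have "eventually (\<lambda>S. L \<in> S) F"
    unfolding F_def eventually_finite_subsets_at_top using L_opinion by (intro exI[of _ "{L}"]) auto
  with ev_Q have ev_L: "eventually (\<lambda>S. r \<le> Q S (T L)) F"
    by eventually_elim blast
  have "r \<le> L (T L)"
    by (rule cluster_point_le[OF L,
          where P = "\<lambda>Q. r \<le> Q (T L)" and \<phi> = "\<lambda>_. r" and \<psi> = "\<lambda>Q. Q (T L)"])
      (use ev_L in auto)
  then show ?thesis
    using L_opinion by blast
qed

text \<open>The theorem: otherwise every finite set of opinions would be matched as above with
  \<open>r = \<epsilon> + \<delta>/2\<close>, and the resulting opinion \<open>P\<close> would violate \<open>P (T P) \<le> \<epsilon>\<close>.\<close>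

theorem theorem2:
  fixes Sig :: "path set set" and T :: "fprob \<Rightarrow> path set" and \<epsilon> \<delta> :: real
  assumes "sigma_algebra UNIV Sig"
    and "\<forall>\<omega> t. cyl \<omega> t \<in> Sig"
    and "0 \<le> \<epsilon>" and "\<epsilon> < 1"
    and "\<forall>P\<in>opinions Sig. open_paths (T P)"
    and "\<forall>P\<in>opinions Sig. P (T P) \<le> \<epsilon>"
    and "0 < \<delta>" and "\<delta> \<le> 1 - \<epsilon>"
  shows "\<exists>S w. strategy (opinions Sig) S w \<and>
           (\<forall>\<omega>. sum w {P\<in>S. \<omega> \<notin> T P} \<ge> 1 - \<epsilon> - \<delta>)"
proof (rule ccontr)
  assume no_strategy: "\<not> ?thesis"
  have "\<exists>Q. regular_prob Q \<and> (\<forall>P\<in>S. 1 - (1 - \<epsilon> - \<delta> / 2) \<le> Q (T P))"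
    if S: "finite S" "S \<subseteq> opinions Sig" for S
  proof (rule calibrated_mixture[OF S(1)])
    show "1 - \<epsilon> - \<delta> < 1 - \<epsilon> - \<delta> / 2"
      using \<open>0 < \<delta>\<close> by simp
    show "\<forall>P\<in>S. open_paths (T P)"
      using assms(5) S(2) by blast
    fix w :: "fprob \<Rightarrow> real" assume "\<forall>P\<in>S. 0 \<le> w P" "sum w S = 1"
    then have "strategy (opinions Sig) S w"
      using S by (simp add: strategy_def)
    then show "\<exists>\<omega>. sum w {P\<in>S. \<omega> \<notin> T P} < 1 - \<epsilon> - \<delta>"
      using no_strategy by (auto simp: not_le)
  qed
  from regular_fixed_point[OF assms(1,2) this]
  obtain P where "P \<in> opinions Sig" and "1 - (1 - \<epsilon> - \<delta> / 2) \<le> P (T P)"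
    by blast
  moreover from this(1) have "P (T P) \<le> \<epsilon>"
    using assms(6) by blast
  ultimately show False
    using \<open>0 < \<delta>\<close> by linarith
qed

end
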